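(* Let $S$ be an instance of Max $r(n)$-Lin-2 AA (with parameter $k$) in which no two equations have the same left-hand side, i.e. $\alpha_j\neq\alpha_p$ for all $j\neq p$. Suppose that some run of Algorithm $\mathcal{A}$ (defined in the context) on $S$ marks $k$ equations. Then $S$ is a YES-instance, i.e. there is an assignment of values in $\mathbb{F}_2$ to $z_1,\dots,z_n$ such that the total weight of satisfied equations is at least $(W+k)/2$.
   Context: Max $r(n)$-Lin-2 AA: for a fixed function $r(n)$, an instance is a system $S$ of $m$ linear equations over $\mathbb{F}_2$ in variables $z_1,\dots,z_n$, Equation $j$ being $\sum_{i\in\alpha_j} z_i=b_j$ with $\emptyset\neq\alpha_j\subseteq\{1,\dots,n\}$, $|\alpha_j|\le r=r(n)$, $b_j\in\mathbb{F}_2$, and a positive integer weight $w_j$; together with a nonnegative integer parameter $k$. It is assumed that every variable appears in at least one equation. Let $W=w_1+\cdots+w_m$. The instance is a YES-instance if some assignment satisfies equations of total weight at least $(W+k)/2$. Combining rule: if two equations $\sum_{i\in\alpha}z_i=b'$ (weight $w'$) and $\sum_{i\in\alpha}z_i=b''$ (weight $w''$) have the same left-hand side, replace them by one equation with that left-hand side: if $b'=b''$, with right-hand side $b'$ and weight $w'+w''$; otherwise, the one of larger weight, with new weight $|w'-w''|$; an equation of resulting weight $0$ is deleted. Algorithm $\mathcal{A}$: initially nothing is marked. While $S\neq\emptyset$ and fewer than $k$ equations are marked: (1) for each $i$ compute $\rho_i$, the number of equations currently in $S$ containing $z_i$; (2) choose a variable $z_l$ still occurring in $S$ with minimum $\rho_l$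 and mark it; (3) choose an arbitrary equation $\sum_{i\in\alpha}z_i=b$ of $S$ containing $z_l$; (4) mark this equation and delete it from $S$; (5) replace every other equation $\sum_{i\in\alpha'}z_i=b'$ of $S$ containing $z_l$ by $\sum_{i\in\alpha\triangle\alpha'}z_i=b+b'$ (keeping its weight), where $\triangle$ is symmetric difference; (6) apply the combining rule exhaustively (deleting equations of weight $0$). *)

theory Defs
  imports Complex_Main "HOL-Library.Multiset" "HOL-Library.Z2"
begin

text \<open>An equation  sum_{i in alpha} z_i = b  with weight w is the triple (alpha, b, w).
  Values in F_2 are of type bit (field of integers mod 2).\<close>

type_synonym equation = "nat set \<times> bit \<times> nat"

definition lhs :: "equation \<Rightarrow> nat set" where "lhs e = fst e"
definition rhs :: "equation \<Rightarrow> bit" where "rhs e = fst (snd e)"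
definition wt  :: "equation \<Rightarrow> nat" where "wt e = snd (snd e)"

definition satisfies :: "(nat \<Rightarrow> bit) \<Rightarrow> equation \<Rightarrow> bool" where
  "satisfies z e \<longleftrightarrow> (\<Sum>i\<in>lhs e. z i) = rhs e"

definition total_weight :: "equation list \<Rightarrow> nat" where
  "total_weight S = sum_list (map wt S)"

definition sat_weight :: "(nat \<Rightarrow> bit) \<Rightarrow> equation list \<Rightarrow> nat" where
  "sat_weight z S = sum_list (map (\<lambda>e. if satisfies z e then wt e else 0) S)"

definition lin2_instance :: "(nat \<Rightarrow> nat) \<Rightarrow> nat \<Rightarrow> equation list \<Rightarrow> bool" where
  "lin2_instance r n S \<longleftrightarrow>
     (\<forall>e\<in>set S. lhs e \<noteq> {} \<and> lhs e \<subseteq> {1..n} \<and> card (lhs e) \<le> r n \<and> wt e > 0) \<and>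
     (\<forall>i\<in>{1..n}. \<exists>e\<in>set S. i \<in> lhs e)"

definition yes_instance :: "equation list \<Rightarrow> nat \<Rightarrow> bool" where
  "yes_instance S k \<longleftrightarrow>
     (\<exists>z :: nat \<Rightarrow> bit. real (sat_weight z S) \<ge> (real (total_weight S) + real k) / 2)"

definition symdiff :: "'a set \<Rightarrow> 'a set \<Rightarrow> 'a set" where
  "symdiff A B = (A - B) \<union> (B - A)"

definition combine :: "equation \<Rightarrow> equation \<Rightarrow> equation multiset" where
  "combine e1 e2 =
     (if rhs e1 = rhs e2 then {# (lhs e1, rhs e1, wt e1 + wt e2) #}
      else if wt e1 > wt e2 then {# (lhs e1, rhs e1, wt e1 - wt e2) #}
      else if wt e2 > wt e1 then {# (lhs e1, rhs e2, wt e2 - wt e1) #}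
      else {#})"

definition comb_step :: "equation multiset \<Rightarrow> equation multiset \<Rightarrow> bool" where
  "comb_step S S' \<longleftrightarrow>
     (\<exists>e1 e2. {#e1, e2#} \<subseteq># S \<and> lhs e1 = lhs e2 \<and>
              S' = S - {#e1, e2#} + combine e1 e2)"

definition comb_exhaust :: "equation multiset \<Rightarrow> equation multiset \<Rightarrow> bool" where
  "comb_exhaust S S' \<longleftrightarrow> comb_step\<^sup>*\<^sup>* S S' \<and> \<not> (\<exists>S''. comb_step S' S'')"

definition vars :: "equation multiset \<Rightarrow> nat set" where
  "vars S = (\<Union>e\<in>set_mset S. lhs e)"

definition rho :: "equation multiset \<Rightarrow> nat \<Rightarrow> nat" where
  "rho S i = size (filter_mset (\<lambda>e. i \<in> lhs e) S)"

definition eliminate :: "nat \<Rightarrow> equation \<Rightarrow> equation \<Rightarrow> equation" where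
  "eliminate l e e' =
     (if l \<in> lhs e' then (symdiff (lhs e) (lhs e'), rhs e + rhs e', wt e') else e')"

text \<open>The state is the current system
  together with the number of marked equations (marked variables do not influence
  later steps: they no longer occur in the system).\<close>
definition alg_step :: "nat \<Rightarrow> equation multiset \<times> nat \<Rightarrow> equation multiset \<times> nat \<Rightarrow> bool" where
  "alg_step k st st' \<longleftrightarrow>
     (let S = fst st; c = snd st in
      S \<noteq> {#} \<and> c < k \<and>
      (\<exists>l e S3.
         l \<in> vars S \<and> (\<forall>i\<in>vars S. rho S l \<le> rho S i) \<and>
         e \<in># S \<and> l \<in> lhs e \<and>
         comb_exhaust (image_mset (eliminate l e) (S - {#e#})) S3 \<and>
         st' = (S3, Suc c)))"

definition run_marks_k :: "equation list \<Rightarrow> nat \<Rightarrow> bool" where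
  "run_marks_k S k \<longleftrightarrow> (\<exists>S'. (alg_step k)\<^sup>*\<^sup>* (mset S, 0) (S', k))"

end

theory Submission
  imports Defs
begin

text \<open>
  For an assignment z, the excess of a system is the weight of the
  equations z satisfies minus the weight of those it violates; S is a YES-instance
  iff some z has excess at least k. Call a system well formed if its left-hand
  sides are pairwise distinct, nonempty and finite, and all weights are positive.
  The combining rule preserves the excess for every z. When Algorithm A eliminates
  z_l using an equation e of a well-formed system T, the resulting system T1 is
  again well formed, smaller, and free of z_l; and every assignment z1 of T1
  extends (by solving e for z_l) to an assignment z of T whose excess on T is
  wt e + (excess of z1 on T1), because e becomes satisfied and every substituted
  equation is satisfied by z iff its original is. Since wt e \<ge> 1, each step of
  a run gains at least one unit of excess, and the system remaining at the end of
  the run still has an assignment of nonnegative excess (by the same elimination,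
  applied until the system is empty). Hence a run marking k equations yields an
  assignment of excess at least k on S.
\<close>

lemma bit_add_self [simp]: "(x::bit) + x = 0"
  by (cases x) (simp_all flip: one_add_one)

text \<open>Summing over a symmetric difference in F_2 is adding the two sums: the
  common part is counted twice and cancels. This justifies the substitution step.\<close>
lemma sum_symdiff:
  fixes z :: "nat \<Rightarrow> bit"
  assumes "finite A" "finite B"
  shows "sum z (symdiff A B) = sum z A + sum z B"
proof -
  have "sum z (symdiff A B) = sum z (A - B) + sum z (B - A)"
    unfolding symdiff_def using assms by (simp add: sum.union_disjoint Diff_Int_distrib2)
  moreover have "sum z A = sum z (A - B) + sum z (A \<inter> B)"
    using assms by (metis Diff_Diff_Int Diff_subset finite_Diff sum.subset_diff inf_le1 add.commute)
  moreover have "sum z B = sum z (B - A) + sum z (A \<inter> B)"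
    using assms by (metis Diff_Diff_Int Diff_subset finite_Diff sum.subset_diff inf_le2
        add.commute inf_commute)
  ultimately show ?thesis
    by (metis add.left_commute add_0_right bit_add_self)
qed

definition signed_wt :: "(nat \<Rightarrow> bit) \<Rightarrow> equation \<Rightarrow> int" where
  "signed_wt z e = (if satisfies z e then int (wt e) else - int (wt e))"

definition excess :: "(nat \<Rightarrow> bit) \<Rightarrow> equation multiset \<Rightarrow> int" where
  "excess z T = (\<Sum>e\<in>#T. signed_wt z e)"

lemma excess_mset_list:
  "excess z (mset S) = 2 * int (sat_weight z S) - int (total_weight S)"
  by (induction S) (auto simp: excess_def signed_wt_def sat_weight_def total_weight_def)

lemma yes_instance_of_excess:
  assumes "excess z (mset S) \<ge> int k"
  shows "yes_instance S k"
proof -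
  have "k + total_weight S \<le> 2 * sat_weight z S"
    using assms by (simp add: excess_mset_list)
  then have "real k + real (total_weight S) \<le> 2 * real (sat_weight z S)"
    by (metis of_nat_add of_nat_le_iff of_nat_mult of_nat_numeral)
  then show ?thesis unfolding yes_instance_def by (auto simp: field_simps)
qed

lemma excess_cong:
  assumes "\<And>e i. e \<in># T \<Longrightarrow> i \<in> lhs e \<Longrightarrow> z i = z' i"
  shows "excess z T = excess z' T"
  unfolding excess_def signed_wt_def satisfies_def
  by (intro arg_cong[where f=sum_mset] image_mset_cong) (use assms in \<open>simp cong: sum.cong\<close>)

text \<open>Combining two equations with the same left-hand side keeps their joint
  contribution to the excess: both are satisfied or both are violated when the
  right-hand sides agree, and exactly one is when they differ.\<close>
lemma excess_combine:
  assumes "lhs e1 = lhs e2"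
  shows "excess z (combine e1 e2) = signed_wt z e1 + signed_wt z e2"
  using assms
  by (cases "rhs e1"; cases "rhs e2")
     (auto simp: combine_def excess_def signed_wt_def satisfies_def lhs_def rhs_def wt_def of_nat_diff)

lemma comb_step_cases:
  assumes "comb_step S S'"
  obtains R e1 e2 where "lhs e1 = lhs e2" "S = R + {#e1, e2#}" "S' = R + combine e1 e2"
  using assms unfolding comb_step_def by (metis subset_mset.diff_add)

lemma comb_steps_excess: "comb_step\<^sup>*\<^sup>* S S' \<Longrightarrow> excess z S' = excess z S"
proof (induction rule: rtranclp_induct)
  case (step S1 S2)
  obtain R e1 e2 where "lhs e1 = lhs e2" "S1 = R + {#e1, e2#}" "S2 = R + combine e1 e2"
    using comb_step_cases[OF step.hyps(2)] by metis
  then have "excess z S2 = excess z S1"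
    using excess_combine[of e1 e2 z] by (simp add: excess_def)
  with step.IH show ?case by simp
qed simp

lemma comb_step_size: "comb_step S S' \<Longrightarrow> size S' < size S"
  by (erule comb_step_cases) (simp add: combine_def)

lemma comb_steps_size: "comb_step\<^sup>*\<^sup>* S S' \<Longrightarrow> size S' \<le> size S"
  by (induction rule: rtranclp_induct) (auto dest: comb_step_size)

lemma comb_steps_preserve:
  assumes "comb_step\<^sup>*\<^sup>* S S'" "\<forall>e\<in>#S. Q (lhs e) \<and> wt e > 0"
  shows "\<forall>e\<in>#S'. Q (lhs e) \<and> wt e > 0"
  using assms(1)
proof (induction rule: rtranclp_induct)
  case (step S1 S2)
  obtain R e1 e2 where "S1 = R + {#e1, e2#}" "S2 = R + combine e1 e2"
    using comb_step_cases[OF step.hyps(2)] by metis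
  moreover have "lhs e = lhs e1 \<and> wt e > 0" if "e \<in># combine e1 e2" "wt e1 > 0" for e
    using that by (auto simp: combine_def lhs_def wt_def split: if_splits)
  ultimately show ?case using step.IH by auto
qed (use assms(2) in simp)

lemma comb_exhaust_exists: "\<exists>S'. comb_exhaust S S'"
proof (induction "size S" arbitrary: S rule: less_induct)
  case less
  show ?case
  proof (cases "\<exists>S''. comb_step S S''")
    case True
    then obtain S'' S' where "comb_step S S''" "comb_exhaust S'' S'"
      using less comb_step_size by blast
    then show ?thesis unfolding comb_exhaust_def by (meson converse_rtranclp_into_rtranclp)
  qed (auto simp: comb_exhaust_def)
qed

text \<open>Well-formedness is the invariant maintained by Algorithm A: the input satisfies
  it by hypothesis, and exhaustive combining restores distinctness after each step.\<close>
definition distinct_lhs :: "equation multiset \<Rightarrow> bool" where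
  "distinct_lhs T \<longleftrightarrow> (\<forall>e1 e2. {#e1, e2#} \<subseteq># T \<longrightarrow> lhs e1 \<noteq> lhs e2)"

definition well_formed :: "equation multiset \<Rightarrow> bool" where
  "well_formed T \<longleftrightarrow> distinct_lhs T \<and> (\<forall>e\<in>#T. lhs e \<noteq> {} \<and> finite (lhs e) \<and> wt e > 0)"

lemma distinct_lhs_mset:
  assumes "distinct (map lhs S)"
  shows "distinct_lhs (mset S)"
  unfolding distinct_lhs_def
proof (intro allI impI notI)
  fix e1 e2 assume sub: "{#e1, e2#} \<subseteq># mset S" and eq: "lhs e1 = lhs e2"
  have "image_mset lhs {#e1, e2#} \<subseteq># mset (map lhs S)"
    using image_mset_subseteq_mono[OF sub] by simp
  then have "count {#lhs e1, lhs e1#} (lhs e1) \<le> count (mset (map lhs S)) (lhs e1)"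
    using eq by (metis image_mset_add_mset image_mset_single mset_subset_eq_count)
  moreover have "count (mset (map lhs S)) (lhs e1) \<le> 1"
    using assms by (simp add: distinct_count_atmost_1)
  ultimately show False by simp
qed

lemma comb_exhaust_distinct_lhs: "comb_exhaust S T \<Longrightarrow> distinct_lhs T"
  unfolding comb_exhaust_def distinct_lhs_def comb_step_def by blast

lemma pair_submset: "e \<in># T \<Longrightarrow> e' \<in># T - {#e#} \<Longrightarrow> {#e, e'#} \<subseteq># T"
  by (metis insert_DiffM mset_subset_eq_add_mset_cancel single_subset_iff)

text \<open>Substituting e into the other equations of a well-formed system removes z_l and
  never produces an empty left-hand side (this is where distinctness is used).\<close>
lemma eliminate_shape:
  assumes wf: "well_formed T" and eT: "e \<in># T" and l: "l \<in> lhs e"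
    and e': "e' \<in># T - {#e#}"
  shows "lhs (eliminate l e e') \<noteq> {} \<and> finite (lhs (eliminate l e e')) \<and>
         l \<notin> lhs (eliminate l e e') \<and> wt (eliminate l e e') > 0"
proof -
  have "lhs e \<noteq> lhs e'"
    using wf pair_submset[OF eT e'] unfolding well_formed_def distinct_lhs_def by blast
  moreover have "finite (lhs e)" "lhs e' \<noteq> {}" "finite (lhs e')" "wt e' > 0"
    using wf eT in_diffD[OF e'] unfolding well_formed_def by blast+
  ultimately show ?thesis using l
    by (auto simp: eliminate_def lhs_def wt_def symdiff_def)
qed

lemma elimination_well_formed:
  assumes wf: "well_formed T" and eT: "e \<in># T" and l: "l \<in> lhs e"
    and ex: "comb_exhaust (image_mset (eliminate l e) (T - {#e#})) T1"
  shows "well_formed T1" "size T1 < size T" "\<forall>x\<in>#T1. l \<notin> lhs x"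
proof -
  let ?Q = "\<lambda>A. A \<noteq> {} \<and> finite A \<and> l \<notin> A"
  have "\<forall>x\<in>#image_mset (eliminate l e) (T - {#e#}). ?Q (lhs x) \<and> wt x > 0"
    using eliminate_shape[OF wf eT l] by auto
  then have "\<forall>x\<in>#T1. ?Q (lhs x) \<and> wt x > 0"
    using comb_steps_preserve[of _ T1 ?Q] ex unfolding comb_exhaust_def by blast
  then show "well_formed T1" "\<forall>x\<in>#T1. l \<notin> lhs x"
    using comb_exhaust_distinct_lhs[OF ex] unfolding well_formed_def by simp_all
  have "size T1 \<le> size (image_mset (eliminate l e) (T - {#e#}))"
    using ex comb_steps_size unfolding comb_exhaust_def by blast
  moreover obtain R where "T = add_mset e R"
    using eT by (blast dest: multi_member_split)
  ultimately show "size T1 < size T" by simp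
qed

text \<open>Back-substitution: an assignment of the reduced system extends, by solving e
  for z_l, to an assignment of T gaining exactly wt e in excess.\<close>
lemma elimination_excess:
  assumes wf: "well_formed T" and eT: "e \<in># T" and l: "l \<in> lhs e"
    and ex: "comb_exhaust (image_mset (eliminate l e) (T - {#e#})) T1"
  shows "\<exists>z. excess z T = int (wt e) + excess z1 T1"
proof -
  define z where "z = z1(l := rhs e + sum z1 (lhs e - {l}))"
  have fin: "finite (lhs x)" if "x \<in># T" for x
    using wf that unfolding well_formed_def by blast
  have agree: "sum z A = sum z1 A" if "l \<notin> A" for A
    using that by (intro sum.cong) (auto simp: z_def)
  have sum_e: "sum z (lhs e) = rhs e"
  proof -
    have "sum z (lhs e) = z l + sum z (lhs e - {l})"
      using fin[OF eT] l by (simp add: sum.remove)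
    also have "\<dots> = rhs e + (sum z1 (lhs e - {l}) + sum z1 (lhs e - {l}))"
      using agree[of "lhs e - {l}"] by (simp add: z_def add.assoc)
    finally show ?thesis by simp
  qed
  have signed_elim: "signed_wt z (eliminate l e e') = signed_wt z e'" if "e' \<in># T" for e'
  proof (cases "l \<in> lhs e'")
    case True
    have "satisfies z (eliminate l e e') \<longleftrightarrow> sum z (lhs e) + sum z (lhs e') = rhs e + rhs e'"
      using True sum_symdiff[OF fin[OF eT] fin[OF that], of z]
      by (simp add: eliminate_def satisfies_def lhs_def rhs_def)
    also have "\<dots> \<longleftrightarrow> satisfies z e'" by (simp only: satisfies_def sum_e add_left_cancel)
    finally show ?thesis using True by (simp add: signed_wt_def eliminate_def wt_def)
  qed (simp add: eliminate_def)
  have "excess z T = signed_wt z e + excess z (T - {#e#})"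
    unfolding excess_def using eT by (metis image_mset_add_mset insert_DiffM sum_mset.insert)
  also have "excess z (T - {#e#}) = excess z (image_mset (eliminate l e) (T - {#e#}))"
    unfolding excess_def multiset.map_comp
    by (intro arg_cong[where f=sum_mset] image_mset_cong) (auto simp: signed_elim dest: in_diffD)
  also have "\<dots> = excess z T1"
    using ex comb_steps_excess unfolding comb_exhaust_def by metis
  also have "\<dots> = excess z1 T1"
    using elimination_well_formed(3)[OF wf eT l ex]
    by (intro excess_cong) (auto simp: z_def)
  also have "signed_wt z e = int (wt e)"
    using sum_e by (simp add: signed_wt_def satisfies_def)
  finally show ?thesis by blast
qed

text \<open>Every well-formed system has an assignment of nonnegative excess: eliminate
  variables one at a time until the system is empty.\<close>
lemma nonneg_excess: "well_formed T \<Longrightarrow> \<exists>z. excess z T \<ge> 0"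
proof (induction "size T" arbitrary: T rule: less_induct)
  case less
  show ?case
  proof (cases "T = {#}")
    case False
    then obtain e where eT: "e \<in># T" by blast
    then obtain l where l: "l \<in> lhs e"
      using less.prems unfolding well_formed_def by blast
    obtain T1 where T1: "comb_exhaust (image_mset (eliminate l e) (T - {#e#})) T1"
      using comb_exhaust_exists by blast
    obtain z1 where "excess z1 T1 \<ge> 0"
      using less.hyps elimination_well_formed[OF less.prems eT l T1] by blast
    moreover obtain z where "excess z T = int (wt e) + excess z1 T1"
      using elimination_excess[OF less.prems eT l T1] by blast
    ultimately show ?thesis by (metis add_nonneg_nonneg of_nat_0_le_iff)
  qed (simp add: excess_def)
qed

text \<open>Each step of a run gains at least one unit of excess.\<close>
lemma run_excess:
  assumes "(alg_step k)\<^sup>*\<^sup>* st st'" "well_formed (fst st)"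
  shows "snd st \<le> snd st' \<and> (\<exists>z. excess z (fst st) \<ge> int (snd st') - int (snd st))"
  using assms
proof (induction rule: converse_rtranclp_induct)
  case base
  then show ?case using nonneg_excess by auto
next
  case (step st1 st2)
  obtain l e T1 where e: "e \<in># fst st1" "l \<in> lhs e"
     and T1: "comb_exhaust (image_mset (eliminate l e) (fst st1 - {#e#})) T1"
     and st2: "st2 = (T1, Suc (snd st1))"
    using step.hyps(1) unfolding alg_step_def Let_def by blast
  obtain z1 where z1: "snd st2 \<le> snd st'" "excess z1 T1 \<ge> int (snd st') - int (snd st2)"
    using step.IH elimination_well_formed(1)[OF step.prems e T1] st2 by auto
  obtain z where "excess z (fst st1) = int (wt e) + excess z1 T1"
    using elimination_excess[OF step.prems e T1] by blast
  moreover have "wt e > 0" using step.prems e(1) unfolding well_formed_def by blast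
  ultimately have "int (snd st') - int (snd st1) \<le> excess z (fst st1)"
    using z1 st2 by simp
  then show ?case using z1 st2 by auto
qed

theorem lemma2:
  fixes r :: "nat \<Rightarrow> nat" and n k :: nat and S :: "equation list"
  assumes "lin2_instance r n S"
    and "\<forall>j<length S. \<forall>p<length S. j \<noteq> p \<longrightarrow> lhs (S ! j) \<noteq> lhs (S ! p)"
    and "run_marks_k S k"
  shows "yes_instance S k"
proof -
  have "distinct (map lhs S)"
    using assms(2) by (simp add: distinct_conv_nth)
  then have "distinct_lhs (mset S)"
    by (rule distinct_lhs_mset)
  moreover have "\<forall>e\<in>#mset S. lhs e \<noteq> {} \<and> finite (lhs e) \<and> wt e > 0"
    using assms(1) unfolding lin2_instance_def by (auto intro: finite_subset)
  ultimately have wf: "well_formed (mset S)"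
    unfolding well_formed_def by blast
  obtain S' where "(alg_step k)\<^sup>*\<^sup>* (mset S, 0) (S', k)"
    using assms(3) unfolding run_marks_k_def by blast
  from run_excess[OF this] wf obtain z where "excess z (mset S) \<ge> int k"
    by auto
  then show ?thesis by (rule yes_instance_of_excess)
qed

end
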